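(* Let $q$ be a prime power, $m\ge1$, let $g_1,\dots,g_n\in\mathbb{F}_{q^m}$ be linearly independent over $\mathbb{F}_q$ and $r_1,\dots,r_n\in\mathbb{F}_{q^m}$. Define $\Pi_1(x):=x^q-g_1^{q-1}x$, $\Lambda_1(x):=\frac{r_1}{g_1}x$, and for $i=1,\dots,n-1$ $$\Pi_{i+1}(x):=\big(x^q-\Pi_i(g_{i+1})^{q-1}x\big)\circ\Pi_i(x),\qquad \Lambda_{i+1}(x):=\Lambda_i(x)-\frac{\Lambda_i(g_{i+1})-r_{i+1}}{\Pi_i(g_{i+1})}\Pi_i(x).$$ Then $\Pi_i(x)=\Pi_{\langle g_1,\dots,g_i\rangle}(x)$ and $\Lambda_i(x)=\Lambda_{(g_1,\dots,g_i),(r_1,\dots,r_i)}(x)$ for $i=1,\dots,n$.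
   Context: Write $[i]:=q^i$. $\langle\cdot\rangle$ denotes $\mathbb{F}_q$-linear span. For an $\mathbb{F}_q$-subspace $U\subseteq\mathbb{F}_{q^m}$, $\Pi_U(x)=\prod_{u\in U}(x-u)$ is the $q$-annihilator polynomial. For $\mathbb{F}_q$-linearly independent $h_1,\dots,h_s\in\mathbb{F}_{q^m}$ and $\mathbf h=(h_1,\dots,h_s)$, $\boldsymbol\rho=(\rho_1,\dots,\rho_s)\in\mathbb{F}_{q^m}^s$, the $q$-Lagrange polynomial is $\Lambda_{\mathbf h,\boldsymbol\rho}(x)=\sum_{i=1}^s(-1)^{s-i}\rho_i\det(\mathfrak D_i(\mathbf h,x))/\det(M_s(h_1,\dots,h_s))$, where $M_s(v_1,\dots,v_t)$ is the $s\times t$ matrix with $(j,l)$ entry $v_l^{[j-1]}$ and $\mathfrak D_i(\mathbf h,x)$ is $M_s(h_1,\dots,h_s,x)$ with its $i$-th column removed. *)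

theory Defs
  imports "HOL-Computational_Algebra.Polynomial" "HOL-Computational_Algebra.Primes"
          "HOL-Combinatorics.Permutations"
begin

definition Fq :: "nat \<Rightarrow> 'a::field set" where
  "Fq q = {x. x ^ q = x}"

definition prime_power :: "nat \<Rightarrow> bool" where
  "prime_power q \<longleftrightarrow> (\<exists>p k. prime p \<and> k > 0 \<and> q = p ^ k)"

definition Fq_lin_indep :: "nat \<Rightarrow> nat \<Rightarrow> (nat \<Rightarrow> 'a::field) \<Rightarrow> bool" where
  "Fq_lin_indep q n g \<longleftrightarrow>
     (\<forall>c. (\<forall>j. c j \<in> Fq q) \<longrightarrow> (\<Sum>j=1..n. c j * g j) = 0 \<longrightarrow> (\<forall>j\<in>{1..n}. c j = 0))"

definition Fq_span :: "nat \<Rightarrow> nat \<Rightarrow> (nat \<Rightarrow> 'a::field) \<Rightarrow> 'a set" where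
  "Fq_span q i g = {\<Sum>j=1..i. c j * g j | c. \<forall>j. c j \<in> Fq q}"

definition annih :: "'a::field set \<Rightarrow> 'a poly" where
  "annih U = (\<Prod>u\<in>U. [:-u, 1:])"

definition detn :: "nat \<Rightarrow> (nat \<Rightarrow> nat \<Rightarrow> 'a::comm_ring_1) \<Rightarrow> 'a" where
  "detn s M = (\<Sum>p\<in>{p. p permutes {1..s}}. of_int (sign p) * (\<Prod>a=1..s. M a (p a)))"

definition Moore :: "nat \<Rightarrow> (nat \<Rightarrow> 'a::field) \<Rightarrow> nat \<Rightarrow> nat \<Rightarrow> 'a" where
  "Moore q h a l = h l ^ (q ^ (a - 1))"

(* D_j(h,x): M_s(h_1,...,h_s,x) (polynomial entries in x) with the j-th column removed *)
definition Dmat :: "nat \<Rightarrow> nat \<Rightarrow> (nat \<Rightarrow> 'a::field) \<Rightarrow> nat \<Rightarrow> nat \<Rightarrow> nat \<Rightarrow> 'a poly" where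
  "Dmat q s h j a b =
     (let l = (if b < j then b else b + 1) in
      if l \<le> s then [: h l ^ (q ^ (a - 1)) :] else monom 1 (q ^ (a - 1)))"

definition qLagrange :: "nat \<Rightarrow> nat \<Rightarrow> (nat \<Rightarrow> 'a::field) \<Rightarrow> (nat \<Rightarrow> 'a) \<Rightarrow> 'a poly" where
  "qLagrange q s h \<rho> =
     (\<Sum>i=1..s. smult ((-1) ^ (s - i) * \<rho> i / detn s (Moore q h)) (detn s (Dmat q s h i)))"

(* PiS q g k = Pi_{k+1},  LamS q g r k = Lambda_{k+1} *)
primrec PiS :: "nat \<Rightarrow> (nat \<Rightarrow> 'a::field) \<Rightarrow> nat \<Rightarrow> 'a poly" where
  "PiS q g 0 = monom 1 q - smult (g 1 ^ (q - 1)) [:0, 1:]"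
| "PiS q g (Suc k) =
     pcompose (monom 1 q - smult (poly (PiS q g k) (g (k + 2)) ^ (q - 1)) [:0, 1:]) (PiS q g k)"

primrec LamS :: "nat \<Rightarrow> (nat \<Rightarrow> 'a::field) \<Rightarrow> (nat \<Rightarrow> 'a) \<Rightarrow> nat \<Rightarrow> 'a poly" where
  "LamS q g r 0 = smult (r 1 / g 1) [:0, 1:]"
| "LamS q g r (Suc k) =
     LamS q g r k - smult ((poly (LamS q g r k) (g (k + 2)) - r (k + 2)) / poly (PiS q g k) (g (k + 2)))
                          (PiS q g k)"

end

theory Submission
  imports Defs
begin

text \<open>
  Everything rests on \<open>F\<^sub>q\<close>-linearity. The \<open>q\<close>-th power map is additive and \<open>F\<^sub>q = {x. x\<^sup>q = x}\<close>
  has exactly \<open>q\<close> elements, so \<open>V\<^sub>i = \<langle>g\<^sub>1, \<dots>, g\<^sub>i\<rangle>\<close> has \<open>q\<^sup>i\<close> elements and an \<open>F\<^sub>q\<close>-linear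
  polynomial of degree \<open>< q\<^sup>i\<close> is determined by its values at \<open>g\<^sub>1, \<dots>, g\<^sub>i\<close>.
  By induction, \<open>\<Pi>\<^sub>i\<close> is monic of degree \<open>q\<^sup>i\<close>, \<open>F\<^sub>q\<close>-linear and vanishes at \<open>g\<^sub>1, \<dots>, g\<^sub>i\<close>, hence on
  \<open>V\<^sub>i\<close>, so it is \<open>\<Pi>\<^bsub>V\<^sub>i\<^esub>\<close>. Consequently \<open>\<Pi>\<^sub>i(g\<^sub>i\<^sub>+\<^sub>1) \<noteq> 0\<close>, and \<open>\<Lambda>\<^sub>i\<close> is \<open>F\<^sub>q\<close>-linear of degree
  at most \<open>q\<^sup>i\<^sup>-\<^sup>1\<close> with \<open>\<Lambda>\<^sub>i(g\<^sub>j) = r\<^sub>j\<close>. The \<open>q\<close>-Lagrange polynomial has the same three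
  properties: expanding \<open>det D\<^sub>j(g, x)\<close> along the column of \<open>x\<close> gives an \<open>F\<^sub>q\<close>-linear polynomial,
  which at \<open>x = g\<^sub>k\<close> has two equal columns unless \<open>k = j\<close>, where it is \<open>\<plusminus>det M\<^sub>s(g)\<close>. The Moore
  determinant is nonzero because \<open>det D\<^sub>s(g, x)\<close> has leading coefficient \<open>det M\<^sub>s\<^sub>-\<^sub>1(g)\<close> and would
  otherwise vanish on \<open>V\<^sub>s\<close>.
\<close>

section \<open>Finite fields\<close>

lemma of_nat_card_UNIV_eq_0: "of_nat (card (UNIV :: 'a::{finite,field} set)) = (0::'a)"
proof -
  have "(\<Sum>y\<in>UNIV. y) = (\<Sum>y\<in>UNIV. 1 + (y::'a))"
    by (rule sum.reindex_bij_witness[of _ "\<lambda>y. 1 + y" "\<lambda>y. y - 1"]) auto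
  also have "\<dots> = of_nat (card (UNIV :: 'a set)) + (\<Sum>y\<in>UNIV. y)"
    by (simp add: sum.distrib)
  finally show ?thesis by simp
qed

lemma power_card_UNIV_eq_same: "(x::'a::{finite,field}) ^ card (UNIV :: 'a set) = x"
proof (cases "x = 0")
  case False
  have "x * (\<Prod>y\<in>UNIV-{0}. x * y) = x * x ^ (card (UNIV :: 'a set) - 1) * \<Prod>(UNIV-{0})"
    by (simp add: prod.distrib mult_ac)
  also have "x * x ^ (card (UNIV :: 'a set) - 1) = x ^ card (UNIV :: 'a set)"
    using finite_UNIV_card_ge_0[where ?'a = 'a] by (simp flip: power_Suc)
  also have "(\<Prod>y\<in>UNIV-{0}. x * y) = (\<Prod>y\<in>UNIV-{0}. y)"
    by (rule prod.reindex_bij_witness[of _ "\<lambda>y. y / x" "\<lambda>y. x * y"]) (use False in auto)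
  finally show ?thesis by simp
qed (use finite_UNIV_card_ge_0[where ?'a = 'a] in auto)

lemma prime_power_ge_2: "prime_power q \<Longrightarrow> q \<ge> 2"
  unfolding prime_power_def
  by (metis One_nat_def le_trans power_increasing power_one_right prime_ge_2_nat
        prime_gt_0_nat Suc_leI)

lemma finite_field_CHAR_power:
  assumes "prime_power q" "m \<ge> 1" "card (UNIV :: 'a::{finite,field} set) = q ^ m"
  obtains k where "q = CHAR('a) ^ k"
proof -
  obtain p k where pk: "prime p" "k > 0" "q = p ^ k"
    using assms(1) unfolding prime_power_def by auto
  have prime_char: "prime CHAR('a)"
    by (rule prime_CHAR_semidom) (simp add: finite_imp_CHAR_pos)
  have "CHAR('a) dvd card (UNIV :: 'a set)"
    using of_nat_card_UNIV_eq_0 of_nat_eq_0_iff_char_dvd by blast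
  hence "CHAR('a) dvd p ^ (k * m)"
    using assms(3) pk(3) by (simp add: power_mult)
  hence "CHAR('a) = p"
    using prime_char pk(1) prime_dvd_power primes_dvd_imp_eq by blast
  with pk(3) that show thesis by blast
qed

lemma finite_field_power_add:
  assumes "prime_power q" "m \<ge> 1" "card (UNIV :: 'a::{finite,field} set) = q ^ m"
  shows "(x + y :: 'a) ^ q = x ^ q + y ^ q"
proof -
  obtain k where "q = CHAR('a) ^ k" using finite_field_CHAR_power[OF assms] .
  moreover have "prime CHAR('a)"
    by (rule prime_CHAR_semidom) (simp add: finite_imp_CHAR_pos)
  ultimately show ?thesis by (intro freshmans_dream') auto
qed

lemma power_qpow_add:
  assumes "\<And>x y::'a::comm_ring_1. (x + y) ^ q = x ^ q + y ^ q"
  shows "(x + y :: 'a) ^ (q ^ e) = x ^ (q ^ e) + y ^ (q ^ e)"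
  by (induction e arbitrary: x y) (simp_all add: assms power_mult flip: mult.commute)

lemma power_qpow_diff:
  assumes "\<And>x y::'a::comm_ring_1. (x + y) ^ q = x ^ q + y ^ q"
  shows "(x - y :: 'a) ^ (q ^ e) = x ^ (q ^ e) - y ^ (q ^ e)"
  using power_qpow_add[OF assms, of "x - y" y e] by (simp add: algebra_simps)

lemma Fq_eq_roots: "Fq q = {x::'a::field. poly (monom 1 q - [:0, 1:]) x = 0}"
  unfolding Fq_def by (simp add: poly_monom)

lemma
  assumes "q \<ge> 2"
  shows finite_Fq: "finite (Fq q :: 'a::field set)"
    and card_Fq_le: "card (Fq q :: 'a set) \<le> q"
proof -
  define U :: "'a poly" where "U = monom 1 q - [:0, 1:]"
  have "coeff U q = 1" using assms unfolding U_def by (simp add: coeff_pCons split: nat.split)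
  hence U: "U \<noteq> 0" by auto
  have "degree U \<le> q" unfolding U_def using assms
    by (intro degree_diff_le) (auto simp: degree_monom_le)
  then show "card (Fq q :: 'a set) \<le> q" "finite (Fq q :: 'a set)"
    unfolding Fq_eq_roots U_def[symmetric]
    using card_poly_roots_bound[OF U] poly_roots_finite[OF U] by auto
qed

text \<open>The map \<open>x \<mapsto> x^q - x\<close> takes values among the roots of the trace polynomial
  \<open>\<Sum>i<m. x^(q^i)\<close>, since the trace of \<open>x^q - x\<close> telescopes to \<open>x^(q^m) - x = 0\<close>.\<close>
lemma card_range_Artin_Schreier_le:
  fixes q m :: nat
  assumes frob: "\<And>x y::'a. (x + y) ^ q = x ^ q + y ^ q"
    and q: "q \<ge> 2" and m: "m \<ge> 1" and card: "card (UNIV :: 'a::{finite,field} set) = q ^ m"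
  shows "card (range (\<lambda>x::'a. x ^ q - x)) \<le> q ^ (m - 1)"
proof -
  define T :: "'a poly" where "T = (\<Sum>i<m. monom 1 (q ^ i))"
  have inj: "q ^ i = q ^ j \<longleftrightarrow> i = j" for i j using q by (simp add: power_inject_exp)
  have "coeff T (q ^ (m - 1)) = (\<Sum>i<m. if i = m - 1 then 1 else 0)"
    unfolding T_def by (simp add: coeff_sum inj)
  hence T: "T \<noteq> 0" using m by auto
  have "degree T \<le> q ^ (m - 1)" unfolding T_def
    using q by (intro degree_sum_le) (auto intro!: order.trans[OF degree_monom_le] power_increasing)
  hence roots: "card {y. poly T y = 0} \<le> q ^ (m - 1)"
    using card_poly_roots_bound[OF T] by linarith
  have "poly T (x ^ q - x) = 0" for x
  proof -
    have "poly T (x ^ q - x) = (\<Sum>i<m. x ^ (q ^ Suc i) - x ^ (q ^ i))"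
      unfolding T_def by (simp add: poly_sum poly_monom power_qpow_diff[OF frob] power_mult
          flip: power_mult mult.commute)
    also have "\<dots> = x ^ (q ^ m) - x ^ (q ^ 0)" by (rule sum_lessThan_telescope)
    also have "\<dots> = 0" using power_card_UNIV_eq_same[of x] card by simp
    finally show ?thesis .
  qed
  hence "range (\<lambda>x::'a. x ^ q - x) \<subseteq> {y. poly T y = 0}" by auto
  with roots show ?thesis using poly_roots_finite[OF T] card_mono order.trans by blast
qed

lemma card_Fq_ge:
  fixes q m :: nat
  assumes frob: "\<And>x y::'a. (x + y) ^ q = x ^ q + y ^ q"
    and q: "q \<ge> 2" and m: "m \<ge> 1" and card: "card (UNIV :: 'a::{finite,field} set) = q ^ m"
  shows "q \<le> card (Fq q :: 'a set)"
proof -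
  define \<phi> where "\<phi> x = x ^ q - x" for x :: 'a
  have fibre: "\<phi> -` {\<phi> x} = (\<lambda>z. x + z) ` Fq q" for x
  proof -
    have "\<phi> y = \<phi> x \<longleftrightarrow> y - x \<in> Fq q" for y
    proof -
      have "(y - x) ^ q = y ^ q - x ^ q" using power_qpow_diff[OF frob, of y x 1] by simp
      show ?thesis unfolding Fq_def \<phi>_def mem_Collect_eq \<open>(y - x) ^ q = y ^ q - x ^ q\<close>
        by (subst (1 2) eq_iff_diff_eq_0) (simp add: algebra_simps)
    qed
    thus ?thesis by (auto simp: image_iff) (metis add.commute diff_add_cancel)
  qed
  have "(UNIV :: 'a set) = (\<Union>y\<in>range \<phi>. \<phi> -` {y})" by auto
  hence "q ^ m \<le> (\<Sum>y\<in>range \<phi>. card (\<phi> -` {y}))"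
    using card card_UN_le[of "range \<phi>" "\<lambda>y. \<phi> -` {y}"] by simp
  also have "\<dots> \<le> card (range \<phi>) * card (Fq q :: 'a set)"
    by (rule sum_bounded_above[where 'a=nat, simplified])
      (auto simp: fibre card_image_le[OF finite_Fq[OF q]])
  also have "\<dots> \<le> q ^ (m - 1) * card (Fq q :: 'a set)"
    using card_range_Artin_Schreier_le[OF assms] unfolding \<phi>_def by simp
  finally have "q ^ (m - 1) * q \<le> q ^ (m - 1) * card (Fq q :: 'a set)"
    using m by (simp flip: power_Suc2)
  thus ?thesis using q by simp
qed

lemma card_Fq:
  assumes "prime_power q" "m \<ge> 1" "card (UNIV :: 'a::{finite,field} set) = q ^ m"
  shows "card (Fq q :: 'a set) = q"
  using card_Fq_ge[OF finite_field_power_add[OF assms] prime_power_ge_2[OF assms(1)] assms(2,3)]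
    card_Fq_le[OF prime_power_ge_2[OF assms(1)]] by (rule antisym[rotated])

section \<open>\<open>F\<^sub>q\<close>-linear maps and spans\<close>

locale q_frobenius =
  fixes q :: nat and g :: "nat \<Rightarrow> 'a::field"
  assumes q_ge_2: "q \<ge> 2"
    and power_q_add: "\<And>x y::'a. (x + y) ^ q = x ^ q + y ^ q"
begin

lemma q_pos: "q > 0"
  using q_ge_2 by linarith

lemma power_q_minus_1_mult: "(x::'a) ^ (q - 1) * x = x ^ q"
  using q_pos by (simp flip: power_Suc2)

lemma power_q_diff: "(x - y :: 'a) ^ q = x ^ q - y ^ q"
  using power_qpow_diff[OF power_q_add, of x y 1] by simp

lemma Fq_0 [simp]: "(0::'a) \<in> Fq q" and Fq_1 [simp]: "(1::'a) \<in> Fq q"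
  unfolding Fq_def using q_pos by auto

lemma Fq_diff: "a \<in> Fq q \<Longrightarrow> b \<in> Fq q \<Longrightarrow> (a - b :: 'a) \<in> Fq q"
  unfolding Fq_def by (simp add: power_q_diff)

lemma Fq_uminus: "a \<in> Fq q \<Longrightarrow> (- a :: 'a) \<in> Fq q"
  using Fq_diff[OF Fq_0] by simp

lemma Fq_power_qpow: "(c::'a) \<in> Fq q \<Longrightarrow> c ^ (q ^ e) = c"
  unfolding Fq_def by (induction e) (simp_all add: power_mult flip: mult.commute)

definition Fq_linear :: "('a \<Rightarrow> 'a) \<Rightarrow> bool" where
  "Fq_linear f \<longleftrightarrow> (\<forall>x y. f (x + y) = f x + f y) \<and> (\<forall>c x. c \<in> Fq q \<longrightarrow> f (c * x) = c * f x)"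

lemma Fq_linear_add: "Fq_linear f \<Longrightarrow> f (x + y) = f x + f y"
  unfolding Fq_linear_def by blast

lemma Fq_linear_scale: "Fq_linear f \<Longrightarrow> c \<in> Fq q \<Longrightarrow> f (c * x) = c * f x"
  unfolding Fq_linear_def by blast

lemma Fq_linear_0: "Fq_linear f \<Longrightarrow> f 0 = 0"
  using Fq_linear_add[of f 0 0] by (metis add_cancel_right_right add_0)

lemma Fq_linear_sum: "Fq_linear f \<Longrightarrow> f (\<Sum>i\<in>I. h i) = (\<Sum>i\<in>I. f (h i))"
  by (induction I rule: infinite_finite_induct) (auto simp: Fq_linear_0 Fq_linear_add)

lemma Fq_linear_power_qpow: "Fq_linear (\<lambda>x. x ^ (q ^ e))"
  unfolding Fq_linear_def
  using power_qpow_add[OF power_q_add] Fq_power_qpow by (auto simp: power_mult_distrib)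

lemma Fq_linear_id: "Fq_linear (\<lambda>x. x)"
  unfolding Fq_linear_def by auto

lemma Fq_linear_cmult: "Fq_linear f \<Longrightarrow> Fq_linear (\<lambda>x. a * f x)"
  unfolding Fq_linear_def by (auto simp: algebra_simps)

lemma Fq_linear_diff: "Fq_linear f \<Longrightarrow> Fq_linear h \<Longrightarrow> Fq_linear (\<lambda>x. f x - h x)"
  unfolding Fq_linear_def by (auto simp: algebra_simps)

lemma Fq_linear_comp: "Fq_linear f \<Longrightarrow> Fq_linear h \<Longrightarrow> Fq_linear (\<lambda>x. f (h x))"
  unfolding Fq_linear_def by auto

lemma Fq_linear_sum_fun: "(\<And>i. i \<in> I \<Longrightarrow> Fq_linear (f i)) \<Longrightarrow> Fq_linear (\<lambda>x. \<Sum>i\<in>I. f i x)"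
  unfolding Fq_linear_def by (auto simp: sum.distrib sum_distrib_left)

lemma Fq_linear_Artin_Schreier: "Fq_linear (\<lambda>x. x ^ q - a * x)"
  using Fq_linear_diff[OF Fq_linear_power_qpow[of 1] Fq_linear_cmult[OF Fq_linear_id]] by simp

lemma Fq_linear_vanishes_on_span:
  assumes "Fq_linear f" "\<And>j. j \<in> {1..i} \<Longrightarrow> f (g j) = 0" "v \<in> Fq_span q i g"
  shows "f v = 0"
proof -
  obtain c where c: "v = (\<Sum>j=1..i. c j * g j)" "\<forall>j. c j \<in> Fq q"
    using assms(3) unfolding Fq_span_def by auto
  show ?thesis
    using assms(2) c by (simp add: Fq_linear_sum[OF assms(1)] Fq_linear_scale[OF assms(1)])
qed

end

locale Fq_basis = q_frobenius q g for q and g :: "nat \<Rightarrow> 'a::field" +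
  fixes n :: nat
  assumes card_Fq: "card (Fq q :: 'a set) = q"
    and lin_indep: "Fq_lin_indep q n g"
begin

lemma lin_indep_prefix:
  assumes "i \<le> n" "\<forall>j. c j \<in> Fq q" "(\<Sum>j=1..i. c j * g j) = 0" "j \<in> {1..i}"
  shows "c j = 0"
proof -
  define c' where "c' l = (if l \<in> {1..i} then c l else 0)" for l
  have "\<forall>l. c' l \<in> Fq q" using assms(2) unfolding c'_def by simp
  moreover have "(\<Sum>l=1..n. c' l * g l) = (\<Sum>l=1..i. c l * g l)"
    using assms(1) by (intro sum.mono_neutral_cong_right) (auto simp: c'_def)
  ultimately have "\<forall>l\<in>{1..n}. c' l = 0"
    using lin_indep assms(3) unfolding Fq_lin_indep_def by simp
  hence "c' j = 0" using assms(1,4) by auto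
  thus ?thesis using assms(4) unfolding c'_def by simp
qed

lemma notin_Fq_span:
  assumes "i < n"
  shows "g (i + 1) \<notin> Fq_span q i g"
proof
  assume "g (i + 1) \<in> Fq_span q i g"
  then obtain c where c: "g (i + 1) = (\<Sum>j=1..i. c j * g j)" "\<forall>j. c j \<in> Fq q"
    unfolding Fq_span_def by blast
  define c' where "c' l = (if l = i + 1 then - 1 else c l)" for l
  have "\<forall>l. c' l \<in> Fq q" using c(2) unfolding c'_def by (simp add: Fq_uminus)
  moreover have "(\<Sum>l=1..i+1. c' l * g l) = 0"
  proof -
    have "(\<Sum>l=1..i+1. c' l * g l) = (\<Sum>l=1..i. c' l * g l) - g (i + 1)"
      by (simp add: c'_def)
    also have "(\<Sum>l=1..i. c' l * g l) = (\<Sum>l=1..i. c l * g l)"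
      by (rule sum.cong) (auto simp: c'_def)
    finally show ?thesis using c(1) by simp
  qed
  ultimately have "c' (i + 1) = 0"
    using assms by (intro lin_indep_prefix[of "i + 1" c']) auto
  thus False unfolding c'_def by simp
qed

lemma card_Fq_span:
  assumes "i \<le> n"
  shows "card (Fq_span q i g) = q ^ i"
proof -
  define S where "S c = (\<Sum>j=1..i. c j * g j)" for c
  have span: "Fq_span q i g = S ` PiE {1..i} (\<lambda>_. Fq q)"
  proof (intro equalityI subsetI)
    fix v assume "v \<in> Fq_span q i g"
    then obtain c where c: "v = S c" "\<forall>j. c j \<in> Fq q" unfolding Fq_span_def S_def by auto
    have "S (restrict c {1..i}) = S c" unfolding S_def by (rule sum.cong) auto
    thus "v \<in> S ` PiE {1..i} (\<lambda>_. Fq q)" using c by (intro image_eqI[of _ _ "restrict c {1..i}"]) auto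
  next
    fix v assume "v \<in> S ` PiE {1..i} (\<lambda>_. Fq q)"
    then obtain c where "v = S c" "c \<in> PiE {1..i} (\<lambda>_. Fq q)" by auto
    define c' where "c' j = (if j \<in> {1..i} then c j else 0)" for j
    have "\<forall>j. c' j \<in> Fq q" using \<open>c \<in> PiE {1..i} (\<lambda>_. Fq q)\<close> unfolding c'_def PiE_iff by simp
    moreover have "v = S c'" unfolding \<open>v = S c\<close> S_def c'_def by (rule sum.cong) auto
    ultimately show "v \<in> Fq_span q i g" unfolding Fq_span_def S_def by (intro CollectI exI[of _ c']) simp
  qed
  have "inj_on S (PiE {1..i} (\<lambda>_. Fq q))"
  proof (rule inj_onI)
    fix c d assume cd: "c \<in> PiE {1..i} (\<lambda>_. Fq q)" "d \<in> PiE {1..i} (\<lambda>_. Fq q)" "S c = S d"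
    define e where "e j = (if j \<in> {1..i} then c j - d j else 0)" for j
    have "e j \<in> Fq q" for j
      using cd(1,2) unfolding e_def PiE_iff by (simp add: Fq_diff)
    moreover have "(\<Sum>j=1..i. e j * g j) = S c - S d"
      unfolding S_def e_def by (simp add: algebra_simps sum_subtractf)
    ultimately have "e j = 0" if "j \<in> {1..i}" for j
      using lin_indep_prefix[OF assms, of e j] cd(3) that by simp
    thus "c = d" by (intro PiE_ext[OF cd(1,2)]) (simp add: e_def)
  qed
  thus ?thesis unfolding span by (simp add: card_image card_PiE card_Fq)
qed

lemma finite_Fq_span:
  assumes "i \<le> n"
  shows "finite (Fq_span q i g)"
proof (rule card_ge_0_finite)
  show "card (Fq_span q i g) > 0" unfolding card_Fq_span[OF assms] using q_pos by simp
qed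

lemma Fq_linear_poly_eqI:
  assumes "i \<le> n" and "Fq_linear (poly p)" "Fq_linear (poly p')"
    and "degree p < q ^ i" "degree p' < q ^ i"
    and "\<And>j. j \<in> {1..i} \<Longrightarrow> poly p (g j) = poly p' (g j)"
  shows "p = p'"
proof (rule poly_eqI_degree)
  fix x assume "x \<in> Fq_span q i g"
  have "poly p x - poly p' x = 0"
    by (rule Fq_linear_vanishes_on_span[OF Fq_linear_diff[OF assms(2,3)] _ \<open>x \<in> Fq_span q i g\<close>])
      (simp add: assms(6))
  thus "poly p x = poly p' x" by simp
qed (use assms(1,4,5) card_Fq_span in auto)

end

section \<open>Determinants indexed by \<open>{1..s}\<close>\<close>

lemma detn_cong:
  assumes "\<And>a b. a \<in> {1..s} \<Longrightarrow> b \<in> {1..s} \<Longrightarrow> M a b = N a b"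
  shows "detn s M = detn s N"
  unfolding detn_def
proof (intro sum.cong refl arg_cong[where f = "(*) _"] prod.cong)
  fix p a assume "p \<in> {p. p permutes {1..s}}" and a: "a \<in> {1..s}"
  hence "p a \<in> {1..s}" using permutes_in_image[of p "{1..s}" a] by simp
  with a show "M a (p a) = N a (p a)" by (rule assms)
qed

lemma detn_0 [simp]: "detn 0 M = 1"
proof -
  have "{p. p permutes {1..0::nat}} = {id}" by auto
  thus ?thesis unfolding detn_def by (simp add: sign_id)
qed

lemma poly_detn: "poly (detn s M) x = detn s (\<lambda>a b. poly (M a b) x)"
  unfolding detn_def by (simp add: poly_sum poly_prod)

lemma detn_expand_col:
  assumes b0: "b0 \<in> {1..s}"
  shows "detn s (\<lambda>a b. if b = b0 then \<phi> a else N a b)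
       = (\<Sum>p | p permutes {1..s}.
            \<phi> (inv p b0) * (of_int (sign p) * (\<Prod>a\<in>{1..s}-{inv p b0}. N a (p a))))"
  unfolding detn_def
proof (rule sum.cong[OF refl])
  fix p assume "p \<in> {p. p permutes {1..s}}"
  hence p: "p permutes {1..s}" by simp
  define a0 where "a0 = inv p b0"
  have a0: "a0 \<in> {1..s}" "p a0 = b0" unfolding a0_def
    using permutes_in_image[OF permutes_inv[OF p]] b0 permutes_inverses[OF p] by auto
  have "(\<Prod>a=1..s. if p a = b0 then \<phi> a else N a (p a))
      = \<phi> a0 * (\<Prod>a\<in>{1..s}-{a0}. if p a = b0 then \<phi> a else N a (p a))"
    using a0 by (subst prod.remove[of _ a0]) auto
  also have "(\<Prod>a\<in>{1..s}-{a0}. if p a = b0 then \<phi> a else N a (p a)) = (\<Prod>a\<in>{1..s}-{a0}. N a (p a))"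
    using a0 permutes_inj[OF p] by (intro prod.cong) (auto dest: injD)
  finally show "of_int (sign p) * (\<Prod>a=1..s. if p a = b0 then \<phi> a else N a (p a))
      = \<phi> (inv p b0) * (of_int (sign p) * (\<Prod>a\<in>{1..s}-{inv p b0}. N a (p a)))"
    unfolding a0_def by (simp add: ac_simps)
qed

lemma detn_permute_cols:
  assumes \<sigma>: "\<sigma> permutes {1..s}"
  shows "detn s (\<lambda>a b. M a (\<sigma> b)) = of_int (sign \<sigma>) * detn s M"
proof -
  have sign_sq: "of_int (sign \<sigma>) * of_int (sign \<sigma>) = (1::'a)"
    by (metis of_int_1 of_int_mult sign_idempotent)
  have "detn s M = (\<Sum>p | p permutes {1..s}. of_int (sign (\<sigma> \<circ> p)) * (\<Prod>a=1..s. M a (\<sigma> (p a))))"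
    unfolding detn_def by (subst setum_permutations_compose_left[OF \<sigma>]) simp
  also have "\<dots> = (\<Sum>p | p permutes {1..s}. of_int (sign \<sigma>) * (of_int (sign p) * (\<Prod>a=1..s. M a (\<sigma> (p a)))))"
    using \<sigma> by (intro sum.cong refl) (simp add: sign_compose permutes_imp_permutation[of "{1..s}"])
  also have "\<dots> = of_int (sign \<sigma>) * detn s (\<lambda>a b. M a (\<sigma> b))"
    unfolding detn_def by (simp add: sum_distrib_left)
  finally show ?thesis
    by (simp add: sign_sq flip: mult.assoc)
qed

text \<open>Swapping the two equal columns only gives \<open>det M = - det M\<close>, which is useless in
  characteristic 2; instead the transposition pairs off even and odd permutations.\<close>
lemma detn_equal_cols:
  assumes b: "b1 \<in> {1..s}" "b2 \<in> {1..s}" "b1 \<noteq> b2"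
    and eq: "\<And>a. a \<in> {1..s} \<Longrightarrow> M a b1 = M a b2"
  shows "detn s M = 0"
proof -
  define \<tau> where "\<tau> = transpose b1 b2"
  have \<tau>: "\<tau> permutes {1..s}" unfolding \<tau>_def using b by (intro permutes_swap_id) auto
  have involution: "\<tau> \<circ> (\<tau> \<circ> p) = p" for p
    unfolding \<tau>_def by (simp add: fun_eq_iff)
  define T where "T p = (\<Prod>a=1..s. M a (p a))" for p
  define Ev where "Ev = {p. p permutes {1..s} \<and> evenperm p}"
  define Od where "Od = {p. p permutes {1..s} \<and> \<not> evenperm p}"
  have "detn s M = (\<Sum>p | p permutes {1..s}. if evenperm p then T p else - T p)"
    unfolding detn_def T_def by (rule sum.cong) (auto simp: sign_def)
  also have "\<dots> = sum T Ev - sum T Od"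
    by (subst sum.If_cases) (auto simp: finite_permutations Ev_def Od_def sum_negf Int_def)
  also have "sum T Od = sum (\<lambda>p. T (\<tau> \<circ> p)) Ev"
  proof (rule sum.reindex_bij_witness[of _ "(\<circ>) \<tau>" "(\<circ>) \<tau>"])
    have "evenperm (\<tau> \<circ> p) \<longleftrightarrow> \<not> evenperm p" if "p permutes {1..s}" for p
      using that \<tau> b(3) unfolding \<tau>_def
      by (simp add: evenperm_comp evenperm_swap permutes_imp_permutation[of "{1..s}"])
    thus "p \<in> Ev \<Longrightarrow> \<tau> \<circ> p \<in> Od" "p \<in> Od \<Longrightarrow> \<tau> \<circ> p \<in> Ev" for p
      unfolding Ev_def Od_def using permutes_compose[OF _ \<tau>] by auto
  qed (simp_all add: involution)
  also have "sum (\<lambda>p. T (\<tau> \<circ> p)) Ev = sum T Ev"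
  proof (rule sum.cong[OF refl])
    fix p assume "p \<in> Ev"
    have "M a (\<tau> (p a)) = M a (p a)" if "a \<in> {1..s}" for a
      using eq[OF that] unfolding \<tau>_def by (auto simp: transpose_def)
    thus "T (\<tau> \<circ> p) = T p" unfolding T_def by (auto intro!: prod.cong)
  qed
  finally show ?thesis by simp
qed

lemma permutes_fixing_last:
  fixes s :: nat
  assumes "s \<ge> 1"
  shows "{p. p permutes {1..s} \<and> p s = s} = {p. p permutes {1..s - 1}}"
proof (intro set_eqI iffI; clarify)
  fix p assume p: "p permutes {1..s}" "p s = s"
  show "p permutes {1..s - 1}" unfolding permutes_def
  proof (intro conjI allI impI)
    fix x assume x: "x \<notin> {1..s - 1}"
    show "p x = x"
    proof (cases "x = s")
      case False
      with x have "x \<notin> {1..s}" by auto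
      thus ?thesis by (rule permutes_not_in[OF p(1)])
    qed (use p(2) in simp)
  qed (use p(1) in \<open>auto simp: permutes_def\<close>)
next
  fix p assume p: "p permutes {1..s - 1}"
  have "p permutes {1..s}" by (rule permutes_subset[OF p]) auto
  moreover have "p s = s" using assms by (intro permutes_not_in[OF p]) simp
  ultimately show "p permutes {1..s} \<and> p s = s" ..
qed

text \<open>The cycle \<open>(k k+1 \<dots> s)\<close>; composing with it moves column \<open>s\<close> to position \<open>k\<close>.\<close>
definition rotate_range :: "nat \<Rightarrow> nat \<Rightarrow> nat \<Rightarrow> nat" where
  "rotate_range k s b = (if b \<in> {k..s} then (if b = s then k else b + 1) else b)"

lemma permutes_sign_rotate_range:
  assumes "k \<in> {1..s}"
  shows "rotate_range k s permutes {1..s}" "sign (rotate_range k s) = (-1) ^ (s - k)"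
proof -
  have "rotate_range k s permutes {1..s} \<and> sign (rotate_range k s) = (-1) ^ (s - k)"
    using assms
  proof (induction "s - k" arbitrary: k)
    case 0
    hence "rotate_range k s = id" unfolding rotate_range_def by (auto simp: fun_eq_iff)
    thus ?case using 0(1)[symmetric] by (simp add: sign_id permutes_id[unfolded id_def])
  next
    case (Suc d)
    have k: "k < s" "k \<ge> 1" using Suc by auto
    have IH: "rotate_range (k + 1) s permutes {1..s}" "sign (rotate_range (k + 1) s) = (-1) ^ (s - (k + 1))"
      using Suc k by auto
    have eq: "rotate_range k s = transpose k (k + 1) \<circ> rotate_range (k + 1) s"
      unfolding rotate_range_def using k by (auto simp: fun_eq_iff transpose_def)
    have t: "transpose k (k + 1) permutes {1..s}" using k by (intro permutes_swap_id) auto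
    have "sign (rotate_range k s) = - sign (rotate_range (k + 1) s)"
      unfolding eq using t IH(1)
      by (simp add: sign_compose sign_swap_id permutes_imp_permutation[of "{1..s}"])
    also have "\<dots> = (-1) ^ Suc (s - (k + 1))"
      using IH(2) by simp
    also have "Suc (s - (k + 1)) = s - k"
      using k by simp
    finally have "sign (rotate_range k s) = (-1) ^ (s - k)" .
    moreover have "rotate_range k s permutes {1..s}"
      unfolding eq by (rule permutes_compose[OF IH(1) t])
    ultimately show ?case by blast
  qed
  thus "rotate_range k s permutes {1..s}" "sign (rotate_range k s) = (-1) ^ (s - k)" by auto
qed

section \<open>The \<open>q\<close>-Lagrange polynomial\<close>

lemma prod_pCons_const: "(\<Prod>a\<in>A. [:f a:]) = [:\<Prod>a\<in>A. f a:]"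
  by (induction A rule: infinite_finite_induct) (auto simp: mult.commute)

lemma inv_permutes_in:
  assumes "p permutes {1..s}" "(s::nat) \<ge> 1"
  shows "inv p s \<in> {1..s}"
  using permutes_in_image[OF permutes_inv[OF assms(1)], of s] assms(2) by simp

text \<open>Column \<open>b < s\<close> of \<open>D\<^sub>j(h, x)\<close> is the column of \<open>h (skip_col j b)\<close>; column \<open>s\<close> is that of \<open>x\<close>.\<close>
definition skip_col :: "nat \<Rightarrow> nat \<Rightarrow> nat" where
  "skip_col j b = (if b < j then b else b + 1)"

context q_frobenius
begin

text \<open>The coefficient of the monomial that permutation \<open>p\<close> contributes to \<open>det D\<^sub>j(g, x)\<close>
  expanded along its last column.\<close>
definition Dmat_coeff :: "nat \<Rightarrow> nat \<Rightarrow> (nat \<Rightarrow> nat) \<Rightarrow> 'a" where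
  "Dmat_coeff s j p = of_int (sign p) * (\<Prod>a\<in>{1..s}-{inv p s}. g (skip_col j (p a)) ^ (q ^ (a - 1)))"

lemma Dmat_eq:
  assumes "j \<in> {1..s}" "b \<in> {1..s}"
  shows "Dmat q s g j a b
       = (if b = s then monom 1 (q ^ (a - 1)) else [: g (skip_col j b) ^ (q ^ (a - 1)) :])"
  using assms unfolding Dmat_def Let_def skip_col_def by auto

lemma detn_Dmat_expand:
  assumes j: "j \<in> {1..s}"
  shows "detn s (Dmat q s g j) = (\<Sum>p | p permutes {1..s}. monom (Dmat_coeff s j p) (q ^ (inv p s - 1)))"
proof -
  have "detn s (Dmat q s g j)
      = detn s (\<lambda>a b. if b = s then monom 1 (q ^ (a - 1)) else [: g (skip_col j b) ^ (q ^ (a - 1)) :])"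
    by (rule detn_cong) (simp add: Dmat_eq[OF j])
  also have "\<dots> = (\<Sum>p | p permutes {1..s}. monom 1 (q ^ (inv p s - 1)) *
       (of_int (sign p) * (\<Prod>a\<in>{1..s}-{inv p s}. [: g (skip_col j (p a)) ^ (q ^ (a - 1)) :])))"
    using j by (intro detn_expand_col) auto
  also have "\<dots> = (\<Sum>p | p permutes {1..s}. monom (Dmat_coeff s j p) (q ^ (inv p s - 1)))"
    unfolding prod_pCons_const of_int_poly Dmat_coeff_def
    by (simp add: mult_monom flip: monom_0)
  finally show ?thesis .
qed

lemma poly_detn_Dmat:
  assumes "j \<in> {1..s}"
  shows "poly (detn s (Dmat q s g j)) x
     = (\<Sum>p | p permutes {1..s}. Dmat_coeff s j p * x ^ (q ^ (inv p s - 1)))"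
  unfolding detn_Dmat_expand[OF assms] by (simp add: poly_sum poly_monom)

lemma Fq_linear_detn_Dmat:
  assumes "j \<in> {1..s}"
  shows "Fq_linear (poly (detn s (Dmat q s g j)))"
  unfolding poly_detn_Dmat[OF assms, abs_def]
  by (intro Fq_linear_sum_fun Fq_linear_cmult Fq_linear_power_qpow)

lemma degree_detn_Dmat:
  assumes j: "j \<in> {1..s}"
  shows "degree (detn s (Dmat q s g j)) \<le> q ^ (s - 1)"
  unfolding detn_Dmat_expand[OF j]
proof (rule degree_sum_le)
  fix p assume "p \<in> {p. p permutes {1..s}}"
  hence "inv p s \<in> {1..s}" using inv_permutes_in[of p s] j by auto
  hence "q ^ (inv p s - 1) \<le> q ^ (s - 1)" using q_pos by (intro power_increasing) auto
  thus "degree (monom (Dmat_coeff s j p) (q ^ (inv p s - 1))) \<le> q ^ (s - 1)"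
    using degree_monom_le order.trans by blast
qed (simp add: finite_permutations)

lemma poly_detn_Dmat_eq_detn:
  assumes "j \<in> {1..s}"
  shows "poly (detn s (Dmat q s g j)) x
     = detn s (\<lambda>a b. if b = s then x ^ (q ^ (a - 1)) else g (skip_col j b) ^ (q ^ (a - 1)))"
  unfolding poly_detn by (rule detn_cong) (simp add: Dmat_eq[OF assms] poly_monom)

text \<open>The top coefficient of \<open>det D\<^sub>s(g, x)\<close> comes from the permutations fixing \<open>s\<close>.\<close>
lemma coeff_detn_Dmat_last:
  assumes s: "s \<ge> 1"
  shows "coeff (detn s (Dmat q s g s)) (q ^ (s - 1)) = detn (s - 1) (Moore q g)"
proof -
  have last_in_range: "s \<in> {1..s}" using s by simp
  have inj: "q ^ a = q ^ b \<longleftrightarrow> a = b" for a b using q_ge_2 by (simp add: power_inject_exp)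
  have top: "inv p s - 1 = s - 1 \<longleftrightarrow> p s = s" if "p permutes {1..s}" for p
  proof -
    have "inv p s - 1 = s - 1 \<longleftrightarrow> inv p s = s" using inv_permutes_in[OF that s] s by auto
    also have "\<dots> \<longleftrightarrow> p s = s" using permutes_inverses[OF that] by metis
    finally show ?thesis .
  qed
  have "coeff (detn s (Dmat q s g s)) (q ^ (s - 1))
      = (\<Sum>p | p permutes {1..s}. if p s = s then Dmat_coeff s s p else 0)"
    unfolding detn_Dmat_expand[of s s, OF last_in_range] coeff_sum coeff_monom inj
    by (intro sum.cong refl if_cong top) auto
  also have "\<dots> = (\<Sum>p | p permutes {1..s} \<and> p s = s. Dmat_coeff s s p)"
    by (subst sum.If_cases) (auto simp: finite_permutations Int_def intro!: sum.cong)
  also have "\<dots> = (\<Sum>p | p permutes {1..s - 1}. Dmat_coeff s s p)"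
    unfolding permutes_fixing_last[OF s] ..
  also have "\<dots> = detn (s - 1) (Moore q g)"
    unfolding detn_def
  proof (rule sum.cong[OF refl])
    fix p assume "p \<in> {p. p permutes {1..s - 1}}"
    hence p: "p permutes {1..s - 1}" by simp
    have "p s = s" using permutes_not_in[OF p, of s] s by auto
    hence "inv p s = s" using permutes_inverses(2)[OF p] by metis
    moreover have "{1..s} - {s} = {1..s - 1}" using s by auto
    moreover have "g (skip_col s (p a)) ^ (q ^ (a - 1)) = Moore q g a (p a)" if "a \<in> {1..s - 1}" for a
      using permutes_in_image[OF p, of a] that s unfolding skip_col_def Moore_def by auto
    ultimately show "Dmat_coeff s s p = of_int (sign p) * (\<Prod>a = 1..s - 1. Moore q g a (p a))"
      unfolding Dmat_coeff_def by simp
  qed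
  finally show ?thesis .
qed

lemma poly_detn_Dmat_off_diag:
  assumes j: "j \<in> {1..s}" and k: "k \<in> {1..s}" and "j \<noteq> k"
  shows "poly (detn s (Dmat q s g j)) (g k) = 0"
proof -
  define b where "b = (if k < j then k else k - 1)"
  have "b \<in> {1..s}" "b \<noteq> s" "skip_col j b = k"
    using assms unfolding b_def skip_col_def by auto
  thus ?thesis unfolding poly_detn_Dmat_eq_detn[OF j]
    using j by (intro detn_equal_cols[of b s s]) auto
qed

lemma poly_detn_Dmat_diag:
  assumes k: "k \<in> {1..s}"
  shows "poly (detn s (Dmat q s g k)) (g k) = (-1) ^ (s - k) * detn s (Moore q g)"
proof -
  have "poly (detn s (Dmat q s g k)) (g k) = detn s (\<lambda>a b. Moore q g a (rotate_range k s b))"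
    unfolding poly_detn_Dmat_eq_detn[OF k]
    by (rule detn_cong) (use k in \<open>auto simp: skip_col_def rotate_range_def Moore_def\<close>)
  also have "\<dots> = (-1) ^ (s - k) * detn s (Moore q g)"
    using permutes_sign_rotate_range[OF k] by (simp add: detn_permute_cols)
  finally show ?thesis .
qed

lemma poly_qLagrange:
  "poly (qLagrange q s g r) x
     = (\<Sum>j=1..s. ((-1) ^ (s - j) * r j / detn s (Moore q g)) * poly (detn s (Dmat q s g j)) x)"
  unfolding qLagrange_def by (simp add: poly_sum)

lemma Fq_linear_qLagrange: "Fq_linear (poly (qLagrange q s g r))"
  unfolding poly_qLagrange[abs_def]
  by (intro Fq_linear_sum_fun Fq_linear_cmult Fq_linear_detn_Dmat) simp

lemma degree_qLagrange: "degree (qLagrange q s g r) \<le> q ^ (s - 1)"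
  unfolding qLagrange_def
  by (intro degree_sum_le order.trans[OF degree_smult_le] degree_detn_Dmat) auto

end

context Fq_basis
begin

lemma detn_Moore_nonzero: "s \<le> n \<Longrightarrow> detn s (Moore q g) \<noteq> 0"
proof (induction s)
  case (Suc t)
  define F where "F = detn (Suc t) (Dmat q (Suc t) g (Suc t))"
  have last: "Suc t \<in> {1..Suc t}" by simp
  have "coeff F (q ^ t) \<noteq> 0"
    using coeff_detn_Dmat_last[of "Suc t"] Suc unfolding F_def by simp
  hence "F \<noteq> 0" by auto
  moreover have "F = 0" if Moore: "detn (Suc t) (Moore q g) = 0"
  proof (rule Fq_linear_poly_eqI[OF Suc.prems])
    show "Fq_linear (poly F)" unfolding F_def by (rule Fq_linear_detn_Dmat[OF last])
    show "Fq_linear (poly 0)" by (simp add: Fq_linear_def)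
    have "degree F \<le> q ^ t" using degree_detn_Dmat[OF last] unfolding F_def by simp
    also have "\<dots> < q ^ Suc t" using q_ge_2 by simp
    finally show "degree F < q ^ Suc t" .
    show "poly F (g j) = poly 0 (g j)" if "j \<in> {1..Suc t}" for j
      using that poly_detn_Dmat_off_diag[OF last that] poly_detn_Dmat_diag[OF last] Moore
      unfolding F_def by (cases "j = Suc t") auto
  qed (use q_pos in simp)
  ultimately show ?case by blast
qed simp

lemma poly_qLagrange_interpolates:
  assumes "s \<le> n" and k: "k \<in> {1..s}"
  shows "poly (qLagrange q s g r) (g k) = r k"
proof -
  define f where "f j = ((-1) ^ (s - j) * r j / detn s (Moore q g)) * poly (detn s (Dmat q s g j)) (g k)" for j
  have "poly (qLagrange q s g r) (g k) = f k + sum f ({1..s} - {k})"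
    unfolding poly_qLagrange f_def[symmetric] using k by (simp add: sum.remove)
  also have "sum f ({1..s} - {k}) = 0"
    using k by (intro sum.neutral) (auto simp: f_def poly_detn_Dmat_off_diag)
  also have "f k = ((-1) ^ (s - k) * (-1) ^ (s - k)) * r k * (detn s (Moore q g) / detn s (Moore q g))"
    unfolding f_def poly_detn_Dmat_diag[OF k] by (simp add: field_simps)
  also have "\<dots> = r k"
    using detn_Moore_nonzero[OF assms(1)] by (simp flip: power_mult_distrib)
  finally show ?thesis by simp
qed

end

section \<open>The recursions\<close>

lemma degree_annih: "finite U \<Longrightarrow> degree (annih U) = card (U :: 'a::field set)"
  unfolding annih_def by (subst degree_prod_eq_sum_degree) auto

lemma lead_coeff_annih: "lead_coeff (annih (U :: 'a::field set)) = 1"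
  unfolding annih_def by (simp add: lead_coeff_prod)

lemma poly_annih_eq_0_iff: "finite U \<Longrightarrow> poly (annih U) x = 0 \<longleftrightarrow> x \<in> (U :: 'a::field set)"
  unfolding annih_def by (simp add: poly_prod)

context q_frobenius
begin

lemma poly_Artin_Schreier: "poly (monom 1 q - smult (a::'a) [:0, 1:]) x = x ^ q - a * x"
  by (simp add: poly_monom mult.commute)

lemma coeff_Artin_Schreier: "coeff (monom 1 q - smult (a::'a) [:0, 1:]) q = 1"
  using q_ge_2 by (simp add: coeff_pCons split: nat.split)

lemma degree_Artin_Schreier: "degree (monom 1 q - smult (a::'a) [:0, 1:]) = q"
proof (rule antisym)
  show "degree (monom 1 q - smult a [:0, 1:]) \<le> q"
    using q_ge_2 by (intro degree_diff_le) (auto simp: degree_monom_le)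
  show "q \<le> degree (monom 1 q - smult a [:0, 1:])"
    using coeff_Artin_Schreier[of a] by (intro le_degree) simp
qed

lemma lead_coeff_Artin_Schreier: "lead_coeff (monom 1 q - smult (a::'a) [:0, 1:]) = 1"
  unfolding degree_Artin_Schreier by (rule coeff_Artin_Schreier)

lemma poly_PiS_0: "poly (PiS q g 0) x = x ^ q - g 1 ^ (q - 1) * x"
  by (simp only: PiS.simps poly_Artin_Schreier)

lemma poly_PiS_Suc:
  "poly (PiS q g (Suc k)) x
     = poly (PiS q g k) x ^ q - poly (PiS q g k) (g (k + 2)) ^ (q - 1) * poly (PiS q g k) x"
  by (simp only: PiS.simps poly_pcompose poly_Artin_Schreier)

lemma degree_PiS: "degree (PiS q g k) = q ^ (k + 1)"
  by (induction k) (simp_all only: PiS.simps degree_pcompose degree_Artin_Schreier, simp_all)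

lemma lead_coeff_PiS: "lead_coeff (PiS q g k) = 1"
proof (induction k)
  case 0
  show ?case by (simp only: PiS.simps lead_coeff_Artin_Schreier)
next
  case (Suc k)
  have "degree (PiS q g k) > 0" using degree_PiS q_pos by simp
  hence "lead_coeff (PiS q g (Suc k))
      = lead_coeff (monom 1 q - smult (poly (PiS q g k) (g (k + 2)) ^ (q - 1)) [:0, 1:])
        * lead_coeff (PiS q g k) ^ q"
    by (simp only: PiS.simps lead_coeff_comp degree_Artin_Schreier)
  thus ?case by (simp only: lead_coeff_Artin_Schreier Suc.IH power_one mult_1)
qed

lemma Fq_linear_PiS: "Fq_linear (poly (PiS q g k))"
proof (induction k)
  case 0
  show ?case unfolding poly_PiS_0 by (rule Fq_linear_Artin_Schreier)
next
  case (Suc k)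
  show ?case unfolding poly_PiS_Suc
    by (rule Fq_linear_comp[OF Fq_linear_Artin_Schreier Suc.IH])
qed

lemma poly_PiS_vanishes: "j \<in> {1..k + 1} \<Longrightarrow> poly (PiS q g k) (g j) = 0"
proof (induction k arbitrary: j)
  case 0
  hence "j = 1" by simp
  thus ?case by (simp only: poly_PiS_0 power_q_minus_1_mult diff_self)
next
  case (Suc k)
  show ?case
  proof (cases "j = k + 2")
    case True
    thus ?thesis by (simp only: poly_PiS_Suc power_q_minus_1_mult diff_self)
  next
    case False
    with Suc have "poly (PiS q g k) (g j) = 0" by simp
    thus ?thesis using q_pos by (simp add: poly_PiS_Suc del: PiS.simps)
  qed
qed

lemma degree_LamS: "degree (LamS q g r k) \<le> q ^ k"
proof (induction k)
  case (Suc k)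
  have "q ^ k \<le> q ^ Suc k" using q_pos by (intro power_increasing) auto
  hence "degree (LamS q g r k) \<le> q ^ Suc k" using Suc.IH by linarith
  moreover have "degree (smult c (PiS q g k)) \<le> q ^ Suc k" for c
    using degree_smult_le[of c "PiS q g k"] degree_PiS[of k] by simp
  ultimately show ?case unfolding LamS.simps by (rule degree_diff_le)
qed (simp add: degree_smult_le)

lemma poly_LamS_Suc:
  "poly (LamS q g r (Suc k)) x
     = poly (LamS q g r k) x
       - (poly (LamS q g r k) (g (k + 2)) - r (k + 2)) / poly (PiS q g k) (g (k + 2))
         * poly (PiS q g k) x"
  by (simp only: LamS.simps poly_diff poly_smult)

lemma Fq_linear_LamS: "Fq_linear (poly (LamS q g r k))"
proof (induction k)
  case 0
  show ?case using Fq_linear_cmult[OF Fq_linear_id, of "r 1 / g 1"] by (simp add: mult.commute)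
next
  case (Suc k)
  show ?case unfolding poly_LamS_Suc
    by (rule Fq_linear_diff[OF Suc.IH Fq_linear_cmult[OF Fq_linear_PiS]])
qed

end

context Fq_basis
begin

lemma PiS_eq_annih:
  assumes "k + 1 \<le> n"
  shows "PiS q g k = annih (Fq_span q (k + 1) g)"
proof (rule poly_eqI_degree_lead_coeff[where n = "q ^ (k + 1)" and A = "Fq_span q (k + 1) g"])
  have fin: "finite (Fq_span q (k + 1) g)" by (rule finite_Fq_span[OF assms])
  have deg: "degree (annih (Fq_span q (k + 1) g)) = q ^ (k + 1)"
    unfolding degree_annih[OF fin] by (rule card_Fq_span[OF assms])
  show "degree (PiS q g k) \<le> q ^ (k + 1)" "degree (annih (Fq_span q (k + 1) g)) \<le> q ^ (k + 1)"
    unfolding deg degree_PiS by simp_all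
  show "coeff (PiS q g k) (q ^ (k + 1)) = coeff (annih (Fq_span q (k + 1) g)) (q ^ (k + 1))"
    using lead_coeff_PiS[of k] lead_coeff_annih[of "Fq_span q (k + 1) g"] unfolding deg degree_PiS
    by simp
  show "q ^ (k + 1) \<le> card (Fq_span q (k + 1) g)" unfolding card_Fq_span[OF assms] ..
  show "poly (PiS q g k) x = poly (annih (Fq_span q (k + 1) g)) x" if "x \<in> Fq_span q (k + 1) g" for x
    using Fq_linear_vanishes_on_span[OF Fq_linear_PiS poly_PiS_vanishes that]
      poly_annih_eq_0_iff[OF fin] that by simp
qed

lemma poly_PiS_nonzero:
  assumes "k + 2 \<le> n"
  shows "poly (PiS q g k) (g (k + 2)) \<noteq> 0"
  using notin_Fq_span[of "k + 1"] assms PiS_eq_annih[of k]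
    poly_annih_eq_0_iff[OF finite_Fq_span[of "k + 1"]] by simp

lemma g1_nonzero:
  assumes "n \<ge> 1"
  shows "g 1 \<noteq> 0"
proof
  assume "g 1 = 0"
  moreover have "(0::'a) \<in> Fq_span q 0 g"
    unfolding Fq_span_def by (rule CollectI, rule exI[of _ "\<lambda>_. 0"]) simp
  ultimately show False using notin_Fq_span[of 0] assms by simp
qed

lemma poly_LamS_interpolates:
  assumes "k + 1 \<le> n" "j \<in> {1..k + 1}"
  shows "poly (LamS q g r k) (g j) = r j"
  using assms
proof (induction k arbitrary: j)
  case 0
  thus ?case using g1_nonzero by simp
next
  case (Suc k)
  have "poly (PiS q g k) (g (k + 2)) \<noteq> 0" using poly_PiS_nonzero Suc.prems(1) by simp
  thus ?case using Suc poly_PiS_vanishes[of j k]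
    by (cases "j = k + 2") (auto simp: field_simps)
qed

lemma LamS_eq_qLagrange:
  assumes "k + 1 \<le> n"
  shows "LamS q g r k = qLagrange q (k + 1) g r"
proof (rule Fq_linear_poly_eqI[OF assms Fq_linear_LamS Fq_linear_qLagrange])
  have "q ^ k < q ^ (k + 1)" using q_ge_2 by simp
  thus "degree (LamS q g r k) < q ^ (k + 1)" "degree (qLagrange q (k + 1) g r) < q ^ (k + 1)"
    using degree_LamS[of r k] degree_qLagrange[of "k + 1" r] by (auto intro: le_less_trans)
  show "poly (LamS q g r k) (g j) = poly (qLagrange q (k + 1) g r) (g j)" if "j \<in> {1..k + 1}" for j
    using poly_LamS_interpolates[OF assms that] poly_qLagrange_interpolates[OF assms that] by simp
qed

end

theorem proposition5:
  fixes q m n :: nat and g r :: "nat \<Rightarrow> 'a::{finite, field}"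
  assumes "prime_power q" and "m \<ge> 1" and "card (UNIV :: 'a set) = q ^ m"
    and "Fq_lin_indep q n g"
  shows "\<forall>i\<in>{1..n}. PiS q g (i - 1) = annih (Fq_span q i g)
                    \<and> LamS q g r (i - 1) = qLagrange q i g r"
proof
  interpret Fq_basis q g n
    using assms finite_field_power_add[OF assms(1-3)] prime_power_ge_2 card_Fq[OF assms(1-3)]
    by unfold_locales auto
  fix i assume "i \<in> {1..n}"
  hence "i - 1 + 1 \<le> n" "i - 1 + 1 = i" by auto
  thus "PiS q g (i - 1) = annih (Fq_span q i g) \<and> LamS q g r (i - 1) = qLagrange q i g r"
    using PiS_eq_annih LamS_eq_qLagrange by metis
qed

end
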